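(* Let $(V,\tau)$ be a topological mixed lattice space. Then: (a) the cones $V_p$ and $V_{sp}$ are both closed if and only if $\tau$ is Hausdorff; (b) if $\tau$ is Hausdorff then $V$ is $(\le)$-Archimedean; (c) if $\tau$ is Hausdorff and $(x_n)$ is a $(\le)$-increasing (resp. $(\preccurlyeq)$-increasing) sequence converging to $x$ in $\tau$, then $x$ is the supremum of $\{x_n\}$ with respect to $\le$ (resp. with respect to $\preccurlyeq$); (d) if $\tau$ is locally mixed-full and $A$ is a bounded set, then $MF_1(A)$ and $MF_2(A)$ are bounded; (e) if $\tau$ is locally mixed-full then every mixed-order interval is bounded; in particular every $(\preccurlyeq)$-order interval $\{z: x\preccurlyeq z\preccurlyeq y\}$ is bounded; (f) if $S$ is a mixed lattice subspace of $V$, then its closure $\overline{S}$ is a mixed lattice subspace; (g) the closure of a quasi-ideal is a quasi-ideal, and the closure of a specific ideal is a specific ideal.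
   Context: A mixed lattice vector space $(V,\le,\preccurlyeq)$ is a real vector space $V$ with two partial orderings $\le$ (initial order) and $\preccurlyeq$ (specific order), each making $V$ a partially ordered vector space, with positive cones $V_p=\{x:0\le x\}$, $V_{sp}=\{x:0\preccurlyeq x\}$, such that: (1) for all $x,y$ the elements $x\curlyvee y=\min\{w: w\succcurlyeq x,\ w\ge y\}$ and $x\curlywedge y=\max\{w: w\preccurlyeq x,\ w\le y\}$ exist (min/max with respect to $\le$); (2) $x\preccurlyeq y$ implies $x\le y$; (3) $x\curlyvee y, x\curlywedge y\in V_{sp}$ whenever $x,y\in V_{sp}$. A topological mixed lattice space is such a $V$ with a vector topology $\tau$ making $(x,y)\mapsto x\curlyvee y$ and $(x,y)\mapsto x\curlywedge y$ continuous $V\times V\to V$. $\tau$ is locally mixed-full if every neighborhood of zero contains a neighborhood $W$ of zero with ($y\in W$, $0\preccurlyeq x\le y$) $\Rightarrow x\in W$. $MF_1(A)=\{y: x\preccurlyeq y\le z\text{ for some }x,z\in A\}$, $MF_2(A)=\{y: x\le y\preccurlyeq z\text{ for some }x,z\in A\}$. $V$ is $(\le)$-Archimedean if $nx\le y$ for all $n\in\mathbb N$ implies $x\le 0$. A sequence is $(\le)$-increasing if $x_n\le x_m$ for $n\le m$ (similarly $(\preccurlyeq)$-increasing). Mixed-order intervals are sets $\{x: z\preccurlyeq x\le y\}$ and $\{x: z\le x\preccurlyeq y\}$. A mixed lattice subspace is a linear subspace closed under $\curlyvee$ and $\curlywedge$. A quasi-ideal is a mixed lattice subspace $A$ such that $x\in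 A$ and $0\preccurlyeq y\le x$ imply $y\in A$. A specific ideal is a mixed lattice subspace $A$ such that $x\in A$ and $0\preccurlyeq y\preccurlyeq x$ imply $y\in A$. *)

theory Defs
  imports "HOL-Analysis.Analysis"
begin

definition ordered_vs :: "('a::real_vector \<Rightarrow> 'a \<Rightarrow> bool) \<Rightarrow> bool" where
  "ordered_vs r \<longleftrightarrow>
     (\<forall>x. r x x) \<and> (\<forall>x y. r x y \<and> r y x \<longrightarrow> x = y) \<and>
     (\<forall>x y z. r x y \<and> r y z \<longrightarrow> r x z) \<and>
     (\<forall>x y z. r x y \<longrightarrow> r (x + z) (y + z)) \<and>
     (\<forall>x y c. r x y \<and> 0 \<le> c \<longrightarrow> r (c *\<^sub>R x) (c *\<^sub>R y))"

definition is_least_wrt :: "('a \<Rightarrow> 'a \<Rightarrow> bool) \<Rightarrow> 'a set \<Rightarrow> 'a \<Rightarrow> bool" where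
  "is_least_wrt r S w \<longleftrightarrow> w \<in> S \<and> (\<forall>v\<in>S. r w v)"

definition is_greatest_wrt :: "('a \<Rightarrow> 'a \<Rightarrow> bool) \<Rightarrow> 'a set \<Rightarrow> 'a \<Rightarrow> bool" where
  "is_greatest_wrt r S w \<longleftrightarrow> w \<in> S \<and> (\<forall>v\<in>S. r v w)"

definition is_sup_wrt :: "('a \<Rightarrow> 'a \<Rightarrow> bool) \<Rightarrow> 'a set \<Rightarrow> 'a \<Rightarrow> bool" where
  "is_sup_wrt r S x \<longleftrightarrow> is_least_wrt r {u. \<forall>s\<in>S. r s u} x"

text \<open>Mixed upper and lower envelopes: le is the initial order, sle the specific order.\<close>
definition mixed_sup :: "('a \<Rightarrow> 'a \<Rightarrow> bool) \<Rightarrow> ('a \<Rightarrow> 'a \<Rightarrow> bool) \<Rightarrow> 'a \<Rightarrow> 'a \<Rightarrow> 'a" where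
  "mixed_sup le sle x y = (THE w. is_least_wrt le {w. sle x w \<and> le y w} w)"

definition mixed_inf :: "('a \<Rightarrow> 'a \<Rightarrow> bool) \<Rightarrow> ('a \<Rightarrow> 'a \<Rightarrow> bool) \<Rightarrow> 'a \<Rightarrow> 'a \<Rightarrow> 'a" where
  "mixed_inf le sle x y = (THE w. is_greatest_wrt le {w. sle w x \<and> le w y} w)"

definition mixed_lattice_vs :: "('a::real_vector \<Rightarrow> 'a \<Rightarrow> bool) \<Rightarrow> ('a \<Rightarrow> 'a \<Rightarrow> bool) \<Rightarrow> bool" where
  "mixed_lattice_vs le sle \<longleftrightarrow>
     ordered_vs le \<and> ordered_vs sle \<and>
     (\<forall>x y. \<exists>w. is_least_wrt le {w. sle x w \<and> le y w} w) \<and>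
     (\<forall>x y. \<exists>w. is_greatest_wrt le {w. sle w x \<and> le w y} w) \<and>
     (\<forall>x y. sle x y \<longrightarrow> le x y) \<and>
     (\<forall>x y. sle 0 x \<and> sle 0 y \<longrightarrow> sle 0 (mixed_sup le sle x y) \<and> sle 0 (mixed_inf le sle x y))"

definition vector_topology :: "'a::real_vector topology \<Rightarrow> bool" where
  "vector_topology T \<longleftrightarrow> topspace T = UNIV \<and>
     continuous_map (prod_topology T T) T (\<lambda>(x, y). x + y) \<and>
     continuous_map (prod_topology euclideanreal T) T (\<lambda>(c, x). c *\<^sub>R x)"

definition top_mixed_lattice_space ::
  "('a::real_vector \<Rightarrow> 'a \<Rightarrow> bool) \<Rightarrow> ('a \<Rightarrow> 'a \<Rightarrow> bool) \<Rightarrow> 'a topology \<Rightarrow> bool" where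
  "top_mixed_lattice_space le sle T \<longleftrightarrow>
     mixed_lattice_vs le sle \<and> vector_topology T \<and>
     continuous_map (prod_topology T T) T (\<lambda>(x, y). mixed_sup le sle x y) \<and>
     continuous_map (prod_topology T T) T (\<lambda>(x, y). mixed_inf le sle x y)"

definition nbhd_of :: "'a topology \<Rightarrow> 'a \<Rightarrow> 'a set \<Rightarrow> bool" where
  "nbhd_of T x N \<longleftrightarrow> (\<exists>U. openin T U \<and> x \<in> U \<and> U \<subseteq> N)"

definition locally_mixed_full ::
  "('a::real_vector \<Rightarrow> 'a \<Rightarrow> bool) \<Rightarrow> ('a \<Rightarrow> 'a \<Rightarrow> bool) \<Rightarrow> 'a topology \<Rightarrow> bool" where
  "locally_mixed_full le sle T \<longleftrightarrow>
     (\<forall>N. nbhd_of T 0 N \<longrightarrow>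
        (\<exists>W. nbhd_of T 0 W \<and> W \<subseteq> N \<and> (\<forall>x y. y \<in> W \<and> sle 0 x \<and> le x y \<longrightarrow> x \<in> W)))"

definition tvs_bounded :: "'a::real_vector topology \<Rightarrow> 'a set \<Rightarrow> bool" where
  "tvs_bounded T A \<longleftrightarrow>
     (\<forall>N. nbhd_of T 0 N \<longrightarrow> (\<exists>c>0. A \<subseteq> (\<lambda>x. c *\<^sub>R x) ` N))"

definition MF1 :: "('a \<Rightarrow> 'a \<Rightarrow> bool) \<Rightarrow> ('a \<Rightarrow> 'a \<Rightarrow> bool) \<Rightarrow> 'a set \<Rightarrow> 'a set" where
  "MF1 le sle A = {y. \<exists>x\<in>A. \<exists>z\<in>A. sle x y \<and> le y z}"

definition MF2 :: "('a \<Rightarrow> 'a \<Rightarrow> bool) \<Rightarrow> ('a \<Rightarrow> 'a \<Rightarrow> bool) \<Rightarrow> 'a set \<Rightarrow> 'a set" where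
  "MF2 le sle A = {y. \<exists>x\<in>A. \<exists>z\<in>A. le x y \<and> sle y z}"

definition archimedean_wrt :: "('a::real_vector \<Rightarrow> 'a \<Rightarrow> bool) \<Rightarrow> bool" where
  "archimedean_wrt le \<longleftrightarrow> (\<forall>x y. (\<forall>n::nat. n \<ge> 1 \<longrightarrow> le (real n *\<^sub>R x) y) \<longrightarrow> le x 0)"

definition mixed_lattice_subspace ::
  "('a::real_vector \<Rightarrow> 'a \<Rightarrow> bool) \<Rightarrow> ('a \<Rightarrow> 'a \<Rightarrow> bool) \<Rightarrow> 'a set \<Rightarrow> bool" where
  "mixed_lattice_subspace le sle S \<longleftrightarrow> subspace S \<and>
     (\<forall>x\<in>S. \<forall>y\<in>S. mixed_sup le sle x y \<in> S \<and> mixed_inf le sle x y \<in> S)"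

definition quasi_ideal ::
  "('a::real_vector \<Rightarrow> 'a \<Rightarrow> bool) \<Rightarrow> ('a \<Rightarrow> 'a \<Rightarrow> bool) \<Rightarrow> 'a set \<Rightarrow> bool" where
  "quasi_ideal le sle A \<longleftrightarrow> mixed_lattice_subspace le sle A \<and>
     (\<forall>x y. x \<in> A \<and> sle 0 y \<and> le y x \<longrightarrow> y \<in> A)"

definition specific_ideal ::
  "('a::real_vector \<Rightarrow> 'a \<Rightarrow> bool) \<Rightarrow> ('a \<Rightarrow> 'a \<Rightarrow> bool) \<Rightarrow> 'a set \<Rightarrow> bool" where
  "specific_ideal le sle A \<longleftrightarrow> mixed_lattice_subspace le sle A \<and>
     (\<forall>x y. x \<in> A \<and> sle 0 y \<and> sle y x \<longrightarrow> y \<in> A)"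

end

theory Submission
  imports Defs
begin

(* Write sup and inf for mixed_sup and mixed_inf, and \<preceq> for the specific order.
   Both cones are fixed-point sets of continuous maps: 0 \<le> x iff sup x 0 = x, and
   0 \<preceq> x iff sup 0 x = x.  Hence they are closed when T is Hausdorff; conversely a closed
   cone C makes {0} = C \<inter> -C closed, hence the diagonal closed.  Closed cones let
   inequalities pass to limits, which gives the Archimedean property (x \<le> y/n \<rightarrow> 0) and the
   supremum property of increasing convergent sequences.  Under local mixed-fullness, if
   x \<preceq> y \<le> z with x, z small then 0 \<preceq> y - x \<le> z - x is small as well, so MF1 and MF2 map
   small neighbourhoods into prescribed ones; as they commute with positive scaling,
   they preserve boundedness.  For an ideal A and 0 \<preceq> y \<le> x in its closure, the
   continuous map a \<mapsto> inf y (sup 0 a) sends A into A and x to y, so y lies in the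
   closure too (for specific ideals use a \<mapsto> inf (sup 0 a) y). *)

lemma ordered_vs_refl: "ordered_vs r \<Longrightarrow> r x x"
  and ordered_vs_antisym: "ordered_vs r \<Longrightarrow> r x y \<Longrightarrow> r y x \<Longrightarrow> x = y"
  and ordered_vs_trans: "ordered_vs r \<Longrightarrow> r x y \<Longrightarrow> r y z \<Longrightarrow> r x z"
  and ordered_vs_add: "ordered_vs r \<Longrightarrow> r x y \<Longrightarrow> r (x + z) (y + z)"
  and ordered_vs_scaleR: "ordered_vs r \<Longrightarrow> r x y \<Longrightarrow> 0 \<le> c \<Longrightarrow> r (c *\<^sub>R x) (c *\<^sub>R y)"
  unfolding ordered_vs_def by blast+

lemma ordered_vs_diff_iff:
  assumes "ordered_vs r"
  shows "r x y \<longleftrightarrow> r 0 (y - x)"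
  using ordered_vs_add[OF assms, of x y "- x"] ordered_vs_add[OF assms, of 0 "y - x" x] by auto

lemma continuous_map_ident [continuous_intros]: "continuous_map X X (\<lambda>x. x)"
  using continuous_map_id by (simp add: id_def)

lemma continuous_map_pair_nhd:
  assumes f: "continuous_map (prod_topology X X) Y f" and U: "openin Y U"
    and a: "a \<in> topspace X" "f (a, a) \<in> U"
  obtains V where "openin X V" "a \<in> V" "\<And>x y. x \<in> V \<Longrightarrow> y \<in> V \<Longrightarrow> f (x, y) \<in> U"
proof -
  have "openin (prod_topology X X) {p \<in> topspace (prod_topology X X). f p \<in> U}"
    using openin_continuous_map_preimage[OF f U] .
  moreover have "(a, a) \<in> {p \<in> topspace (prod_topology X X). f p \<in> U}"
    using a by simp
  ultimately obtain V1 V2 where V: "openin X V1" "openin X V2" "a \<in> V1" "a \<in> V2"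
    "V1 \<times> V2 \<subseteq> {p \<in> topspace (prod_topology X X). f p \<in> U}"
    unfolding openin_prod_topology_alt by meson
  show ?thesis
    by (rule that[of "V1 \<inter> V2"]) (use V in auto)
qed

lemma closure_of_stable_map:
  assumes "continuous_map X X f" "f ` S \<subseteq> S" "x \<in> X closure_of S"
  shows "f x \<in> X closure_of S"
  using continuous_map_image_closure_subset[OF assms(1)] closure_of_mono[OF assms(2)] assms(3)
  by blast

lemma closure_of_stable_binop:
  assumes g: "continuous_map (prod_topology X X) X (\<lambda>(x, y). g x y)"
    and S: "\<And>a b. a \<in> S \<Longrightarrow> b \<in> S \<Longrightarrow> g a b \<in> S"
    and "x \<in> X closure_of S" "y \<in> X closure_of S"
  shows "g x y \<in> X closure_of S"
proof -
  have "(x, y) \<in> prod_topology X X closure_of (S \<times> S)"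
    using assms(3,4) by (simp add: closure_of_Times)
  then have "g x y \<in> X closure_of ((\<lambda>(x, y). g x y) ` (S \<times> S))"
    using continuous_map_image_closure_subset[OF g] by blast
  moreover have "(\<lambda>(x, y). g x y) ` (S \<times> S) \<subseteq> S"
    using S by auto
  ultimately show ?thesis
    using closure_of_mono by blast
qed

lemma tvs_bounded_subset: "tvs_bounded T B \<Longrightarrow> A \<subseteq> B \<Longrightarrow> tvs_bounded T A"
  unfolding tvs_bounded_def by blast

locale mixed_lattice =
  fixes le sle :: "'a::real_vector \<Rightarrow> 'a \<Rightarrow> bool"
  assumes mixed_lattice_vs: "mixed_lattice_vs le sle"
begin

lemma ordered_le: "ordered_vs le"
  and ordered_sle: "ordered_vs sle"
  and sle_imp_le: "sle x y \<Longrightarrow> le x y"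
  using mixed_lattice_vs by (auto simp: mixed_lattice_vs_def)

lemma mixed_inf_nonneg: "sle 0 x \<Longrightarrow> sle 0 y \<Longrightarrow> sle 0 (mixed_inf le sle x y)"
  using mixed_lattice_vs by (simp add: mixed_lattice_vs_def)

lemma mixed_sup_is_least: "is_least_wrt le {w. sle x w \<and> le y w} (mixed_sup le sle x y)"
proof -
  obtain w where w: "is_least_wrt le {w. sle x w \<and> le y w} w"
    using mixed_lattice_vs unfolding mixed_lattice_vs_def by blast
  moreover have "v = w" if "is_least_wrt le {w. sle x w \<and> le y w} v" for v
    using w that ordered_vs_antisym[OF ordered_le] unfolding is_least_wrt_def by blast
  ultimately show ?thesis
    unfolding mixed_sup_def by (rule theI)
qed

lemma mixed_inf_is_greatest: "is_greatest_wrt le {w. sle w x \<and> le w y} (mixed_inf le sle x y)"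
proof -
  obtain w where w: "is_greatest_wrt le {w. sle w x \<and> le w y} w"
    using mixed_lattice_vs unfolding mixed_lattice_vs_def by blast
  moreover have "v = w" if "is_greatest_wrt le {w. sle w x \<and> le w y} v" for v
    using w that ordered_vs_antisym[OF ordered_le] unfolding is_greatest_wrt_def by blast
  ultimately show ?thesis
    unfolding mixed_inf_def by (rule theI)
qed

lemma mixed_sup_upper_left: "sle x (mixed_sup le sle x y)"
  and mixed_sup_upper_right: "le y (mixed_sup le sle x y)"
  and mixed_sup_least: "sle x w \<Longrightarrow> le y w \<Longrightarrow> le (mixed_sup le sle x y) w"
  using mixed_sup_is_least[of x y] by (auto simp: is_least_wrt_def)

lemma mixed_inf_lower_left: "sle (mixed_inf le sle x y) x"
  and mixed_inf_lower_right: "le (mixed_inf le sle x y) y"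
  and mixed_inf_greatest: "sle w x \<Longrightarrow> le w y \<Longrightarrow> le w (mixed_inf le sle x y)"
  using mixed_inf_is_greatest[of x y] by (auto simp: is_greatest_wrt_def)

lemma mixed_sup_eq_left_iff: "mixed_sup le sle x y = x \<longleftrightarrow> le y x"
proof
  assume "le y x"
  then have "le (mixed_sup le sle x y) x"
    by (intro mixed_sup_least ordered_vs_refl[OF ordered_sle])
  then show "mixed_sup le sle x y = x"
    using ordered_vs_antisym[OF ordered_le] sle_imp_le[OF mixed_sup_upper_left] by blast
qed (metis mixed_sup_upper_right)

lemma mixed_sup_eq_right_iff: "mixed_sup le sle x y = y \<longleftrightarrow> sle x y"
proof
  assume "sle x y"
  then have "le (mixed_sup le sle x y) y"
    by (intro mixed_sup_least ordered_vs_refl[OF ordered_le])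
  then show "mixed_sup le sle x y = y"
    using ordered_vs_antisym[OF ordered_le] mixed_sup_upper_right by blast
qed (metis mixed_sup_upper_left)

lemma mixed_inf_eq_left_iff: "mixed_inf le sle x y = x \<longleftrightarrow> le x y"
proof
  assume "le x y"
  then have "le x (mixed_inf le sle x y)"
    by (intro mixed_inf_greatest ordered_vs_refl[OF ordered_sle])
  then show "mixed_inf le sle x y = x"
    using ordered_vs_antisym[OF ordered_le] sle_imp_le[OF mixed_inf_lower_left] by blast
qed (metis mixed_inf_lower_right)

lemma mixed_inf_eq_right_iff: "mixed_inf le sle x y = y \<longleftrightarrow> sle y x"
proof
  assume "sle y x"
  then have "le y (mixed_inf le sle x y)"
    by (intro mixed_inf_greatest ordered_vs_refl[OF ordered_le])
  then show "mixed_inf le sle x y = y"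
    using ordered_vs_antisym[OF ordered_le] mixed_inf_lower_right by blast
qed (metis mixed_inf_lower_left)

lemma MF_scaleR_subset:
  assumes c: "0 < c"
  shows "MF1 le sle ((\<lambda>x. c *\<^sub>R x) ` A) \<subseteq> (\<lambda>x. c *\<^sub>R x) ` MF1 le sle A"
    and "MF2 le sle ((\<lambda>x. c *\<^sub>R x) ` A) \<subseteq> (\<lambda>x. c *\<^sub>R x) ` MF2 le sle A"
proof -
  have unscale: "r a (inverse c *\<^sub>R y)" if "ordered_vs r" "r (c *\<^sub>R a) y" for r a y
    using ordered_vs_scaleR[OF that, of "inverse c"] c by simp
  have unscale': "r (inverse c *\<^sub>R y) a" if "ordered_vs r" "r y (c *\<^sub>R a)" for r a y
    using ordered_vs_scaleR[OF that, of "inverse c"] c by simp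
  have rescale: "y = c *\<^sub>R (inverse c *\<^sub>R y)" for y :: 'a
    using c by simp
  show "MF1 le sle ((\<lambda>x. c *\<^sub>R x) ` A) \<subseteq> (\<lambda>x. c *\<^sub>R x) ` MF1 le sle A"
  proof
    fix y assume "y \<in> MF1 le sle ((\<lambda>x. c *\<^sub>R x) ` A)"
    then obtain a b where "a \<in> A" "b \<in> A" "sle (c *\<^sub>R a) y" "le y (c *\<^sub>R b)"
      unfolding MF1_def by blast
    then have "inverse c *\<^sub>R y \<in> MF1 le sle A"
      unfolding MF1_def using unscale[OF ordered_sle] unscale'[OF ordered_le] by blast
    then show "y \<in> (\<lambda>x. c *\<^sub>R x) ` MF1 le sle A"
      using rescale by blast
  qed
  show "MF2 le sle ((\<lambda>x. c *\<^sub>R x) ` A) \<subseteq> (\<lambda>x. c *\<^sub>R x) ` MF2 le sle A"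
  proof
    fix y assume "y \<in> MF2 le sle ((\<lambda>x. c *\<^sub>R x) ` A)"
    then obtain a b where "a \<in> A" "b \<in> A" "le (c *\<^sub>R a) y" "sle y (c *\<^sub>R b)"
      unfolding MF2_def by blast
    then have "inverse c *\<^sub>R y \<in> MF2 le sle A"
      unfolding MF2_def using unscale[OF ordered_le] unscale'[OF ordered_sle] by blast
    then show "y \<in> (\<lambda>x. c *\<^sub>R x) ` MF2 le sle A"
      using rescale by blast
  qed
qed

end

locale topological_vector_space =
  fixes T :: "'a::real_vector topology"
  assumes vector_topology: "vector_topology T"
begin

lemma topspace_tvs [simp]: "topspace T = UNIV"
  using vector_topology by (simp add: vector_topology_def)

lemma continuous_map_tvs_const [continuous_intros]: "continuous_map X T (\<lambda>x. c)"
  by simp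

lemma continuous_map_tvs_add [continuous_intros]:
  assumes "continuous_map X T f" "continuous_map X T g"
  shows "continuous_map X T (\<lambda>x. f x + g x)"
proof -
  have "continuous_map (prod_topology T T) T (\<lambda>(x, y). x + y)"
    using vector_topology by (simp add: vector_topology_def)
  from continuous_map_compose[OF continuous_map_pairedI[OF assms] this] show ?thesis
    by (simp add: o_def)
qed

lemma continuous_map_tvs_scaleR [continuous_intros]:
  assumes "continuous_map X euclideanreal f" "continuous_map X T g"
  shows "continuous_map X T (\<lambda>x. f x *\<^sub>R g x)"
proof -
  have "continuous_map (prod_topology euclideanreal T) T (\<lambda>(c, x). c *\<^sub>R x)"
    using vector_topology by (simp add: vector_topology_def)
  from continuous_map_compose[OF continuous_map_pairedI[OF assms] this] show ?thesis
    by (simp add: o_def)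
qed

lemma continuous_map_tvs_uminus [continuous_intros]:
  "continuous_map X T f \<Longrightarrow> continuous_map X T (\<lambda>x. - f x)"
  using continuous_map_tvs_scaleR[of X "\<lambda>x. -1" f] by simp

lemma continuous_map_tvs_diff [continuous_intros]:
  assumes "continuous_map X T f" "continuous_map X T g"
  shows "continuous_map X T (\<lambda>x. f x - g x)"
proof -
  have "continuous_map X T (\<lambda>x. f x + - g x)"
    by (intro continuous_map_tvs_add continuous_map_tvs_uminus assms)
  then show ?thesis
    by simp
qed

lemma limitin_tvs_diff:
  assumes "limitin T f a F" "limitin T g b F"
  shows "limitin T (\<lambda>n. f n - g n) (a - b) F"
proof -
  have "limitin (prod_topology T T) (\<lambda>n. (f n, g n)) (a, b) F"
    using assms by (simp add: limitin_pairwise o_def)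
  moreover have "continuous_map (prod_topology T T) T (\<lambda>p. fst p - snd p)"
    by (intro continuous_intros)
  ultimately show ?thesis
    using continuous_map_limit by (fastforce simp: o_def)
qed

lemma subspace_closure_of:
  assumes S: "subspace S"
  shows "subspace (T closure_of S)"
  unfolding subspace_def
proof (intro conjI ballI allI)
  show "0 \<in> T closure_of S"
    using S closure_of_subset[of S T] by (auto simp: subspace_def)
  show "x + y \<in> T closure_of S" if "x \<in> T closure_of S" "y \<in> T closure_of S" for x y
    using closure_of_stable_binop[of T "(+)", OF _ _ that] S vector_topology
    by (simp add: subspace_def vector_topology_def)
  show "c *\<^sub>R x \<in> T closure_of S" if "x \<in> T closure_of S" for c x
  proof (rule closure_of_stable_map[OF _ _ that])
    show "continuous_map T T (\<lambda>x. c *\<^sub>R x)"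
      by (intro continuous_intros) simp
    show "(\<lambda>x. c *\<^sub>R x) ` S \<subseteq> S"
      using S by (auto simp: subspace_def)
  qed
qed

lemma limitin_cone_le:
  assumes r: "ordered_vs r" and C: "closedin T {x. r 0 x}"
    and "limitin T f a F" "limitin T g b F" "\<not> trivial_limit F"
    and "eventually (\<lambda>n. r (f n) (g n)) F"
  shows "r a b"
proof -
  have "eventually (\<lambda>n. g n - f n \<in> {x. r 0 x}) F"
    using assms(6) by (simp add: ordered_vs_diff_iff[OF r, symmetric])
  from limitin_tvs_diff[OF assms(4,3)] C this assms(5) have "b - a \<in> {x. r 0 x}"
    by (rule limitin_closedin)
  then show ?thesis
    by (simp add: ordered_vs_diff_iff[OF r, symmetric])
qed

lemma is_sup_wrt_incseq_limit:
  assumes r: "ordered_vs r" and C: "closedin T {x. r 0 x}"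
    and inc: "\<And>n m. n \<le> m \<Longrightarrow> r (xs n) (xs m)" and lim: "limitin T xs x sequentially"
  shows "is_sup_wrt r (range xs) x"
proof -
  have "r (xs n) x" for n
  proof (rule limitin_cone_le[OF r C _ lim trivial_limit_sequentially])
    show "limitin T (\<lambda>_. xs n) (xs n) sequentially"
      by simp
    show "eventually (\<lambda>m. r (xs n) (xs m)) sequentially"
      using inc by (auto simp: eventually_sequentially)
  qed
  moreover have "r x u" if "\<forall>s\<in>range xs. r s u" for u
  proof (rule limitin_cone_le[OF r C lim _ trivial_limit_sequentially])
    show "limitin T (\<lambda>_. u) u sequentially"
      by simp
    show "eventually (\<lambda>n. r (xs n) u) sequentially"
      using that by simp
  qed
  ultimately show ?thesis
    unfolding is_sup_wrt_def is_least_wrt_def by blast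
qed

lemma archimedean_if_closedin_cone:
  assumes r: "ordered_vs r" and C: "closedin T {x. r 0 x}"
  shows "archimedean_wrt r"
  unfolding archimedean_wrt_def
proof (intro allI impI)
  fix x y assume bound: "\<forall>n::nat. n \<ge> 1 \<longrightarrow> r (real n *\<^sub>R x) y"
  have "continuous_map euclideanreal T (\<lambda>t. t *\<^sub>R y)"
    by (intro continuous_intros)
  moreover have "limitin euclideanreal (\<lambda>n. 1 / real n) 0 sequentially"
    using lim_1_over_n by simp
  ultimately have "limitin T ((\<lambda>t. t *\<^sub>R y) \<circ> (\<lambda>n. 1 / real n)) (0 *\<^sub>R y) sequentially"
    by (rule continuous_map_limit)
  then have lim: "limitin T (\<lambda>n. (1 / real n) *\<^sub>R y) 0 sequentially"
    by (simp add: o_def)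
  have "r x ((1 / real n) *\<^sub>R y)" if "n \<ge> 1" for n
    using ordered_vs_scaleR[OF r bound[rule_format, OF that], of "1 / real n"] that by simp
  then have "eventually (\<lambda>n. r x ((1 / real n) *\<^sub>R y)) sequentially"
    by (auto simp: eventually_sequentially)
  moreover have "limitin T (\<lambda>_. x) x sequentially"
    by simp
  ultimately show "r x 0"
    using limitin_cone_le[OF r C _ lim trivial_limit_sequentially] by blast
qed

lemma Hausdorff_if_closedin_cone:
  assumes r: "ordered_vs r" and C: "closedin T {x. r 0 x}"
  shows "Hausdorff_space T"
proof -
  have "closedin T {x. r 0 (- x)}"
    using closedin_continuous_map_preimage[OF continuous_map_tvs_uminus[OF continuous_map_ident] C]
    by simp
  moreover have "{x. r 0 x} \<inter> {x. r 0 (- x)} = {0}"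
  proof -
    have "r 0 (- x) \<longleftrightarrow> r x 0" for x
      using ordered_vs_diff_iff[OF r, of x 0] by simp
    then show ?thesis
      using ordered_vs_antisym[OF r] ordered_vs_refl[OF r] by auto
  qed
  ultimately have zero: "closedin T {0}"
    using C by (metis closedin_Int)
  have "continuous_map (prod_topology T T) T (\<lambda>p. fst p - snd p)"
    by (intro continuous_intros)
  from closedin_continuous_map_preimage[OF this zero]
  have "closedin (prod_topology T T) {p \<in> topspace (prod_topology T T). fst p - snd p \<in> {0}}" .
  moreover have "{p \<in> topspace (prod_topology T T). fst p - snd p \<in> {0}} = (\<lambda>x. (x, x)) ` topspace T"
    by (auto simp: image_iff)
  ultimately show ?thesis
    unfolding Hausdorff_space_closedin_diagonal by simp
qed

lemma tvs_scaleR_small: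
  assumes "openin T U" "0 \<in> U"
  shows "\<exists>d>0. \<forall>t. \<bar>t\<bar> < d \<longrightarrow> t *\<^sub>R a \<in> U"
proof -
  have "continuous_map euclideanreal T (\<lambda>t. t *\<^sub>R a)"
    by (intro continuous_intros)
  from openin_continuous_map_preimage[OF this assms(1)] have "open {t. t *\<^sub>R a \<in> U}"
    by simp
  moreover have "0 \<in> {t. t *\<^sub>R a \<in> U}"
    using assms(2) by simp
  ultimately obtain d where "d > 0" "\<forall>t. dist t 0 < d \<longrightarrow> t \<in> {t. t *\<^sub>R a \<in> U}"
    unfolding open_dist by blast
  then show ?thesis
    by auto
qed

lemma tvs_scaleR_small_finite:
  assumes "finite A" "openin T U" "0 \<in> U"
  shows "\<exists>d>0. \<forall>a\<in>A. \<forall>t. \<bar>t\<bar> < d \<longrightarrow> t *\<^sub>R a \<in> U"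
  using assms(1)
proof (induction rule: finite_induct)
  case empty
  show ?case
    by (intro exI[of _ 1]) simp
next
  case (insert a A)
  then obtain d1 d2 where "d1 > 0" "\<forall>a\<in>A. \<forall>t. \<bar>t\<bar> < d1 \<longrightarrow> t *\<^sub>R a \<in> U"
    "d2 > 0" "\<forall>t. \<bar>t\<bar> < d2 \<longrightarrow> t *\<^sub>R a \<in> U"
    using tvs_scaleR_small[OF assms(2,3)] by blast
  then show ?case
    by (intro exI[of _ "min d1 d2"]) auto
qed

lemma tvs_bounded_finite:
  assumes "finite A"
  shows "tvs_bounded T A"
  unfolding tvs_bounded_def
proof (intro allI impI)
  fix N assume "nbhd_of T 0 N"
  then obtain U where U: "openin T U" "0 \<in> U" "U \<subseteq> N"
    unfolding nbhd_of_def by blast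
  then obtain d where d: "d > 0" "\<And>a t. a \<in> A \<Longrightarrow> \<bar>t\<bar> < d \<Longrightarrow> t *\<^sub>R a \<in> U"
    using tvs_scaleR_small_finite[OF assms] by meson
  have "a \<in> (\<lambda>x. (2 / d) *\<^sub>R x) ` N" if "a \<in> A" for a
  proof (rule image_eqI)
    show "a = (2 / d) *\<^sub>R ((d / 2) *\<^sub>R a)"
      using d(1) by simp
    have "\<bar>d / 2\<bar> < d"
      using d(1) by simp
    then show "(d / 2) *\<^sub>R a \<in> N"
      using d(2)[OF that] U(3) by blast
  qed
  moreover have "2 / d > 0"
    using d(1) by simp
  ultimately show "\<exists>c>0. A \<subseteq> (\<lambda>x. c *\<^sub>R x) ` N"
    by blast
qed

end

locale topological_mixed_lattice = mixed_lattice le sle + topological_vector_space T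
  for le sle :: "'a::real_vector \<Rightarrow> 'a \<Rightarrow> bool" and T :: "'a topology" +
  assumes continuous_mixed_sup: "continuous_map (prod_topology T T) T (\<lambda>(x, y). mixed_sup le sle x y)"
    and continuous_mixed_inf: "continuous_map (prod_topology T T) T (\<lambda>(x, y). mixed_inf le sle x y)"

lemma topological_mixed_lattice_iff:
  "topological_mixed_lattice le sle T \<longleftrightarrow> top_mixed_lattice_space le sle T"
  by (simp add: topological_mixed_lattice_def topological_mixed_lattice_axioms_def
      mixed_lattice_def topological_vector_space_def top_mixed_lattice_space_def)

context topological_mixed_lattice
begin

lemma continuous_map_mixed_sup [continuous_intros]:
  assumes "continuous_map X T f" "continuous_map X T g"
  shows "continuous_map X T (\<lambda>x. mixed_sup le sle (f x) (g x))"
  using continuous_map_compose[OF continuous_map_pairedI[OF assms] continuous_mixed_sup]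
  by (simp add: o_def)

lemma continuous_map_mixed_inf [continuous_intros]:
  assumes "continuous_map X T f" "continuous_map X T g"
  shows "continuous_map X T (\<lambda>x. mixed_inf le sle (f x) (g x))"
  using continuous_map_compose[OF continuous_map_pairedI[OF assms] continuous_mixed_inf]
  by (simp add: o_def)

lemma closedin_le_cone:
  assumes "Hausdorff_space T"
  shows "closedin T {x. le 0 x}"
proof -
  have "continuous_map T T (\<lambda>x. mixed_sup le sle x 0)"
    by (intro continuous_intros)
  from closedin_continuous_maps_eq[OF assms this continuous_map_ident]
  have "closedin T {x \<in> topspace T. mixed_sup le sle x 0 = x}" .
  then show ?thesis
    by (simp add: mixed_sup_eq_left_iff)
qed

lemma closedin_sle_cone:
  assumes "Hausdorff_space T"
  shows "closedin T {x. sle 0 x}"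
proof -
  have "continuous_map T T (\<lambda>x. mixed_sup le sle 0 x)"
    by (intro continuous_intros)
  from closedin_continuous_maps_eq[OF assms this continuous_map_ident]
  have "closedin T {x \<in> topspace T. mixed_sup le sle 0 x = x}" .
  then show ?thesis
    by (simp add: mixed_sup_eq_right_iff)
qed

lemma closedin_cones_iff_Hausdorff:
  "closedin T {x. le 0 x} \<and> closedin T {x. sle 0 x} \<longleftrightarrow> Hausdorff_space T"
  using closedin_le_cone closedin_sle_cone Hausdorff_if_closedin_cone[OF ordered_le] by blast

lemma mixed_full_gap_nhd:
  assumes lmf: "locally_mixed_full le sle T" and N: "openin T N" "0 \<in> N"
  obtains V where "openin T V" "0 \<in> V"
    "\<And>x z v. x \<in> V \<Longrightarrow> z \<in> V \<Longrightarrow> sle 0 v \<Longrightarrow> le v (z - x) \<Longrightarrow> v \<in> N \<and> - v \<in> N"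
proof -
  have "openin T {x. - x \<in> N}"
    using openin_continuous_map_preimage[OF continuous_map_tvs_uminus[OF continuous_map_ident] N(1)]
    by simp
  then have "nbhd_of T 0 (N \<inter> {x. - x \<in> N})"
    unfolding nbhd_of_def using N by (intro exI[of _ "N \<inter> {x. - x \<in> N}"]) auto
  then obtain W where W: "nbhd_of T 0 W" "W \<subseteq> N \<inter> {x. - x \<in> N}"
    and solid: "\<And>x y. y \<in> W \<Longrightarrow> sle 0 x \<Longrightarrow> le x y \<Longrightarrow> x \<in> W"
    using lmf unfolding locally_mixed_full_def by meson
  obtain W0 where W0: "openin T W0" "0 \<in> W0" "W0 \<subseteq> W"
    using W(1) unfolding nbhd_of_def by blast
  have minus: "continuous_map (prod_topology T T) T (\<lambda>p. fst p - snd p)"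
    by (intro continuous_intros)
  obtain V where V: "openin T V" "0 \<in> V" "\<And>a b. a \<in> V \<Longrightarrow> b \<in> V \<Longrightarrow> a - b \<in> W0"
    by (rule continuous_map_pair_nhd[OF minus W0(1), of 0]) (use W0(2) in auto)
  show ?thesis
  proof (rule that[OF V(1,2)])
    fix x z v assume "x \<in> V" "z \<in> V" "sle 0 v" "le v (z - x)"
    then show "v \<in> N \<and> - v \<in> N"
      using solid V(3) W0(3) W(2) by blast
  qed
qed

lemma MF_nhd:
  assumes lmf: "locally_mixed_full le sle T" and N: "nbhd_of T 0 N"
  obtains V where "nbhd_of T 0 V" "MF1 le sle V \<subseteq> N" "MF2 le sle V \<subseteq> N"
proof -
  obtain U where U: "openin T U" "0 \<in> U" "U \<subseteq> N"
    using N unfolding nbhd_of_def by blast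
  have plus: "continuous_map (prod_topology T T) T (\<lambda>p. fst p + snd p)"
    by (intro continuous_intros)
  obtain N1 where N1: "openin T N1" "0 \<in> N1" "\<And>a b. a \<in> N1 \<Longrightarrow> b \<in> N1 \<Longrightarrow> a + b \<in> U"
    by (rule continuous_map_pair_nhd[OF plus U(1), of 0]) (use U(2) in auto)
  obtain W where W: "openin T W" "0 \<in> W"
    and gap: "\<And>x z v. x \<in> W \<Longrightarrow> z \<in> W \<Longrightarrow> sle 0 v \<Longrightarrow> le v (z - x) \<Longrightarrow> v \<in> N1 \<and> - v \<in> N1"
    using mixed_full_gap_nhd[OF lmf N1(1,2)] by blast
  show ?thesis
  proof
    show "nbhd_of T 0 (W \<inter> N1)"
      unfolding nbhd_of_def using W N1(1,2) by (intro exI[of _ "W \<inter> N1"]) auto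
    show "MF1 le sle (W \<inter> N1) \<subseteq> N"
    proof
      fix y assume "y \<in> MF1 le sle (W \<inter> N1)"
      then obtain x z where xz: "x \<in> W \<inter> N1" "z \<in> W \<inter> N1" "sle x y" "le y z"
        unfolding MF1_def by blast
      have "sle 0 (y - x)" "le (y - x) (z - x)"
        using xz(3,4) ordered_vs_diff_iff[OF ordered_sle, of x y] ordered_vs_diff_iff[OF ordered_le, of y z]
          ordered_vs_diff_iff[OF ordered_le, of "y - x" "z - x"] by simp_all
      then have "x + (y - x) \<in> U"
        using N1(3) gap xz(1,2) by blast
      then show "y \<in> N"
        using U(3) by auto
    qed
    show "MF2 le sle (W \<inter> N1) \<subseteq> N"
    proof
      fix y assume "y \<in> MF2 le sle (W \<inter> N1)"
      then obtain x z where xz: "x \<in> W \<inter> N1" "z \<in> W \<inter> N1" "le x y" "sle y z"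
        unfolding MF2_def by blast
      have "sle 0 (z - y)" "le (z - y) (z - x)"
        using xz(3,4) ordered_vs_diff_iff[OF ordered_sle, of y z] ordered_vs_diff_iff[OF ordered_le, of x y]
          ordered_vs_diff_iff[OF ordered_le, of "z - y" "z - x"] by simp_all
      then have "z + - (z - y) \<in> U"
        using N1(3) gap xz(1,2) by blast
      then show "y \<in> N"
        using U(3) by auto
    qed
  qed
qed

lemma tvs_bounded_MF:
  assumes lmf: "locally_mixed_full le sle T" and A: "tvs_bounded T A"
  shows "tvs_bounded T (MF1 le sle A)" and "tvs_bounded T (MF2 le sle A)"
proof -
  have "\<exists>c>0. MF1 le sle A \<subseteq> (\<lambda>x. c *\<^sub>R x) ` N \<and> MF2 le sle A \<subseteq> (\<lambda>x. c *\<^sub>R x) ` N"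
    if N: "nbhd_of T 0 N" for N
  proof -
    obtain V where V: "nbhd_of T 0 V" "MF1 le sle V \<subseteq> N" "MF2 le sle V \<subseteq> N"
      using MF_nhd[OF lmf N] .
    then obtain c where c: "c > 0" "A \<subseteq> (\<lambda>x. c *\<^sub>R x) ` V"
      using A unfolding tvs_bounded_def by blast
    have "MF1 le sle A \<subseteq> MF1 le sle ((\<lambda>x. c *\<^sub>R x) ` V)"
      "MF2 le sle A \<subseteq> MF2 le sle ((\<lambda>x. c *\<^sub>R x) ` V)"
      using c(2) unfolding MF1_def MF2_def by blast+
    then show ?thesis
      using MF_scaleR_subset[OF c(1), of V] V(2,3) c(1) by blast
  qed
  then show "tvs_bounded T (MF1 le sle A)" and "tvs_bounded T (MF2 le sle A)"
    unfolding tvs_bounded_def by meson+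
qed

lemma tvs_bounded_mixed_intervals:
  assumes lmf: "locally_mixed_full le sle T"
  shows "tvs_bounded T {x. sle z x \<and> le x y}"
    and "tvs_bounded T {x. le z x \<and> sle x y}"
    and "tvs_bounded T {x. sle z x \<and> sle x y}"
proof -
  have "tvs_bounded T {z, y}"
    by (simp add: tvs_bounded_finite)
  then have MF: "tvs_bounded T (MF1 le sle {z, y})" "tvs_bounded T (MF2 le sle {z, y})"
    using tvs_bounded_MF[OF lmf] by blast+
  show "tvs_bounded T {x. sle z x \<and> le x y}"
    by (rule tvs_bounded_subset[OF MF(1)]) (unfold MF1_def, blast)
  show "tvs_bounded T {x. le z x \<and> sle x y}"
    by (rule tvs_bounded_subset[OF MF(2)]) (unfold MF2_def, blast)
  show "tvs_bounded T {x. sle z x \<and> sle x y}"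
    by (rule tvs_bounded_subset[OF MF(1)]) (unfold MF1_def, use sle_imp_le in blast)
qed

lemma mixed_lattice_subspace_closure_of:
  assumes "mixed_lattice_subspace le sle S"
  shows "mixed_lattice_subspace le sle (T closure_of S)"
proof -
  have S: "subspace S" "\<And>x y. x \<in> S \<Longrightarrow> y \<in> S \<Longrightarrow> mixed_sup le sle x y \<in> S"
    "\<And>x y. x \<in> S \<Longrightarrow> y \<in> S \<Longrightarrow> mixed_inf le sle x y \<in> S"
    using assms by (auto simp: mixed_lattice_subspace_def)
  show ?thesis
    unfolding mixed_lattice_subspace_def
    using subspace_closure_of[OF S(1)] closure_of_stable_binop[OF continuous_mixed_sup S(2)]
      closure_of_stable_binop[OF continuous_mixed_inf S(3)]
    by blast
qed

lemma quasi_ideal_closure_of: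
  assumes "quasi_ideal le sle A"
  shows "quasi_ideal le sle (T closure_of A)"
proof -
  have A: "mixed_lattice_subspace le sle A" "\<And>x y. x \<in> A \<Longrightarrow> sle 0 y \<Longrightarrow> le y x \<Longrightarrow> y \<in> A"
    using assms by (auto simp: quasi_ideal_def)
  have "y \<in> T closure_of A" if x: "x \<in> T closure_of A" and y: "sle 0 y" "le y x" for x y
  proof -
    define h where "h a = mixed_inf le sle y (mixed_sup le sle 0 a)" for a
    have "h a \<in> A" if "a \<in> A" for a
    proof (rule A(2))
      show "mixed_sup le sle 0 a \<in> A"
        using A(1) that by (auto simp: mixed_lattice_subspace_def subspace_def)
      show "sle 0 (h a)"
        unfolding h_def using y(1) mixed_sup_upper_left by (rule mixed_inf_nonneg)
      show "le (h a) (mixed_sup le sle 0 a)"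
        unfolding h_def by (rule mixed_inf_lower_right)
    qed
    moreover have "continuous_map T T h"
      unfolding h_def by (intro continuous_intros)
    ultimately have "h x \<in> T closure_of A"
      using closure_of_stable_map[OF _ _ x] by blast
    moreover have "h x = y"
      unfolding h_def mixed_inf_eq_left_iff
      using ordered_vs_trans[OF ordered_le y(2) mixed_sup_upper_right] .
    ultimately show ?thesis
      by simp
  qed
  then show ?thesis
    using mixed_lattice_subspace_closure_of[OF A(1)] by (auto simp: quasi_ideal_def)
qed

lemma specific_ideal_closure_of:
  assumes "specific_ideal le sle A"
  shows "specific_ideal le sle (T closure_of A)"
proof -
  have A: "mixed_lattice_subspace le sle A" "\<And>x y. x \<in> A \<Longrightarrow> sle 0 y \<Longrightarrow> sle y x \<Longrightarrow> y \<in> A"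
    using assms by (auto simp: specific_ideal_def)
  have "y \<in> T closure_of A" if x: "x \<in> T closure_of A" and y: "sle 0 y" "sle y x" for x y
  proof -
    define h where "h a = mixed_inf le sle (mixed_sup le sle 0 a) y" for a
    have "h a \<in> A" if "a \<in> A" for a
    proof (rule A(2))
      show "mixed_sup le sle 0 a \<in> A"
        using A(1) that by (auto simp: mixed_lattice_subspace_def subspace_def)
      show "sle 0 (h a)"
        unfolding h_def using mixed_sup_upper_left y(1) by (rule mixed_inf_nonneg)
      show "sle (h a) (mixed_sup le sle 0 a)"
        unfolding h_def by (rule mixed_inf_lower_left)
    qed
    moreover have "continuous_map T T h"
      unfolding h_def by (intro continuous_intros)
    ultimately have "h x \<in> T closure_of A"
      using closure_of_stable_map[OF _ _ x] by blast
    moreover have "mixed_sup le sle 0 x = x"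
      using ordered_vs_trans[OF ordered_sle y] by (simp add: mixed_sup_eq_right_iff)
    then have "h x = y"
      unfolding h_def using y(2) by (simp add: mixed_inf_eq_right_iff)
    ultimately show ?thesis
      by simp
  qed
  then show ?thesis
    using mixed_lattice_subspace_closure_of[OF A(1)] by (auto simp: specific_ideal_def)
qed

end

theorem theorem3p16:
  fixes le sle :: "'a::real_vector \<Rightarrow> 'a \<Rightarrow> bool" and T :: "'a topology"
  assumes "top_mixed_lattice_space le sle T"
  shows
    "((closedin T {x. le 0 x} \<and> closedin T {x. sle 0 x}) \<longleftrightarrow> Hausdorff_space T)
     \<and> (Hausdorff_space T \<longrightarrow> archimedean_wrt le)
     \<and> (Hausdorff_space T \<longrightarrow>
          (\<forall>xs x. (\<forall>n m. n \<le> m \<longrightarrow> le (xs n) (xs m)) \<and> limitin T xs x sequentially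
                  \<longrightarrow> is_sup_wrt le (range xs) x)
        \<and> (\<forall>xs x. (\<forall>n m. n \<le> m \<longrightarrow> sle (xs n) (xs m)) \<and> limitin T xs x sequentially
                  \<longrightarrow> is_sup_wrt sle (range xs) x))
     \<and> (locally_mixed_full le sle T \<longrightarrow>
          (\<forall>A. tvs_bounded T A \<longrightarrow> tvs_bounded T (MF1 le sle A) \<and> tvs_bounded T (MF2 le sle A)))
     \<and> (locally_mixed_full le sle T \<longrightarrow>
          (\<forall>z y. tvs_bounded T {x. sle z x \<and> le x y} \<and> tvs_bounded T {x. le z x \<and> sle x y}
                 \<and> tvs_bounded T {x. sle z x \<and> sle x y}))
     \<and> (\<forall>S. mixed_lattice_subspace le sle S \<longrightarrow> mixed_lattice_subspace le sle (T closure_of S))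
     \<and> (\<forall>A. quasi_ideal le sle A \<longrightarrow> quasi_ideal le sle (T closure_of A))
     \<and> (\<forall>A. specific_ideal le sle A \<longrightarrow> specific_ideal le sle (T closure_of A))"
proof -
  interpret topological_mixed_lattice le sle T
    using assms by (simp add: topological_mixed_lattice_iff)
  show ?thesis
  proof (intro conjI)
  qed (use closedin_cones_iff_Hausdorff
      archimedean_if_closedin_cone[OF ordered_le closedin_le_cone]
      is_sup_wrt_incseq_limit[OF ordered_le closedin_le_cone]
      is_sup_wrt_incseq_limit[OF ordered_sle closedin_sle_cone]
      tvs_bounded_MF tvs_bounded_mixed_intervals mixed_lattice_subspace_closure_of
      quasi_ideal_closure_of specific_ideal_closure_of in blast)+
qed

end
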